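(* Let $A$ be an $n\times n$ irreducible nonnegative matrix with largest eigenvalue $1$ and positive $w$ with $Aw=w$, $A^Tw=w$, and let $\tilde A=\frac12(A+A^T)$. Then for every nonempty $U\subsetneq[n]$ and every $b\in\mathbb R^{|U|}$, \[ \operatorname{cap}_{U,b}(\tilde A)\le\operatorname{cap}_{U,b}(A). \]
   Context: For an irreducible nonnegative $n\times n$ matrix $B$ with PF eigenvalue $1$ and a positive vector $w$ with $Bw=w$, $B^Tw=w$, set $L=I-B$. For nonempty $U\subsetneq[n]$ and $b\in\mathbb R^{|U|}$ (indexed by $U$), there is a unique $q\in\mathbb R^n$ with $q_i=w_ib_i$ for $i\in U$ and $(Lq)_i=0$ for $i\notin U$; the capacity is $\operatorname{cap}_{U,b}(B)=\langle q,Lq\rangle$. *)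

theory Defs
  imports "HOL-Analysis.Analysis"
begin

fun mat_pow :: "real^'n^'n \<Rightarrow> nat \<Rightarrow> real^'n^'n" where
  "mat_pow A 0 = mat 1"
| "mat_pow A (Suc k) = A ** mat_pow A k"

definition nonneg_matrix :: "real^'n^'n \<Rightarrow> bool" where
  "nonneg_matrix A \<longleftrightarrow> (\<forall>i j. A $ i $ j \<ge> 0)"

definition irreducible_nonneg :: "real^'n^'n \<Rightarrow> bool" where
  "irreducible_nonneg A \<longleftrightarrow> nonneg_matrix A \<and> (\<forall>i j. \<exists>k. mat_pow A k $ i $ j > 0)"

definition complex_eigenvalue :: "real^'n^'n \<Rightarrow> complex \<Rightarrow> bool" where
  "complex_eigenvalue A c \<longleftrightarrow>
     (\<exists>v :: complex^'n. v \<noteq> 0 \<and> (\<chi> i j. complex_of_real (A $ i $ j)) *v v = c *s v)"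

definition largest_eigenvalue_one :: "real^'n^'n \<Rightarrow> bool" where
  "largest_eigenvalue_one A \<longleftrightarrow>
     complex_eigenvalue A 1 \<and> (\<forall>c. complex_eigenvalue A c \<longrightarrow> cmod c \<le> 1)"

text \<open>Capacity. b is given as a function on indices; only its values on U matter.
  q is the unique vector with q_i = w_i b_i on U and (L q)_i = 0 off U, L = I - B.\<close>
definition cap :: "'n set \<Rightarrow> ('n \<Rightarrow> real) \<Rightarrow> real^'n \<Rightarrow> real^'n^'n \<Rightarrow> real" where
  "cap U b w B =
     (let L = mat 1 - B;
          q = (THE q. (\<forall>i\<in>U. q $ i = w $ i * b i) \<and> (\<forall>i. i \<notin> U \<longrightarrow> (L *v q) $ i = 0))
      in q \<bullet> (L *v q))"

end

theory Submission
  imports Defs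
begin

(* Both capacities are values of one quadratic form: x \<bullet> (A x) = x \<bullet> (A^T x), so L = I - A and
   its symmetrization L~ = I - (A + A^T)/2 agree on the diagonal x = y.  Because A w = w = A^T w
   with w > 0, AM-GM gives x \<bullet> (A x) \<le> x \<bullet> x, i.e. the symmetric matrix L~ is positive semidefinite.
   Hence the solution q~ of the Dirichlet problem for L~ minimizes x \<bullet> (L~ x) among all x with the
   same boundary values on U (Dirichlet principle), and the solution q for L is such an x:
   cap(A~) = q~ \<bullet> (L~ q~) \<le> q \<bullet> (L~ q) = q \<bullet> (L q) = cap(A).
   Both Dirichlet problems are uniquely solvable by the maximum principle, as A and A~ are
   irreducible. *)

definition closed_under :: "real^'n^'n \<Rightarrow> 'n set \<Rightarrow> bool" where
  "closed_under B S \<longleftrightarrow> (\<forall>i\<in>S. \<forall>j. 0 < B $ i $ j \<longrightarrow> j \<in> S)"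

definition dirichlet_solution :: "real^'n^'n \<Rightarrow> 'n set \<Rightarrow> ('n \<Rightarrow> real) \<Rightarrow> real^'n \<Rightarrow> bool" where
  "dirichlet_solution B U c q \<longleftrightarrow>
     (\<forall>i\<in>U. q $ i = c i) \<and> (\<forall>i. i \<notin> U \<longrightarrow> ((mat 1 - B) *v q) $ i = 0)"

lemma matrix_vector_mult_component: "(B *v x) $ i = (\<Sum>j\<in>UNIV. B $ i $ j * x $ j)"
  by (simp add: matrix_vector_mult_def)

lemma inner_vec_sum: "(x::real^'n) \<bullet> y = (\<Sum>i\<in>UNIV. x $ i * y $ i)"
  by (simp add: inner_vec_def)

lemma mat_one_minus_mult_vector: "(mat 1 - B) *v x = x - B *v (x::real^'n)"
  by (simp add: matrix_vector_mult_diff_rdistrib)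

lemma transpose_diff: "transpose (A - B) = transpose A - transpose (B::'a::ring_1^'n^'m)"
  by (simp add: transpose_def vec_eq_iff)

section \<open>Positivity patterns of nonnegative matrices\<close>

lemma matrix_mult_pos_iff:
  fixes A B :: "real^'n^'n"
  assumes "nonneg_matrix A" "nonneg_matrix B"
  shows "0 < (A ** B) $ i $ j \<longleftrightarrow> (\<exists>l. 0 < A $ i $ l \<and> 0 < B $ l $ j)"
proof -
  have nonneg: "0 \<le> A $ i $ l * B $ l $ j" for l
    using assms by (simp add: nonneg_matrix_def)
  have "0 < (A ** B) $ i $ j \<longleftrightarrow> (\<exists>l. 0 < A $ i $ l * B $ l $ j)"
  proof
    assume "0 < (A ** B) $ i $ j"
    then have "0 < (\<Sum>l\<in>UNIV. A $ i $ l * B $ l $ j)"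
      by (simp add: matrix_matrix_mult_def)
    then show "\<exists>l. 0 < A $ i $ l * B $ l $ j"
      by (meson not_le sum_nonpos)
  next
    assume "\<exists>l. 0 < A $ i $ l * B $ l $ j"
    then obtain l where "0 < A $ i $ l * B $ l $ j" ..
    then have "0 < (\<Sum>k\<in>UNIV. A $ i $ k * B $ k $ j)"
      using nonneg by (intro sum_pos2[of UNIV l]) auto
    then show "0 < (A ** B) $ i $ j"
      by (simp add: matrix_matrix_mult_def)
  qed
  also have "\<dots> \<longleftrightarrow> (\<exists>l. 0 < A $ i $ l \<and> 0 < B $ l $ j)"
    using assms by (auto simp: nonneg_matrix_def zero_less_mult_iff less_le)
  finally show ?thesis .
qed

lemma nonneg_matrix_mat_pow: "nonneg_matrix A \<Longrightarrow> nonneg_matrix (mat_pow A k)"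
proof (induction k)
  case 0
  then show ?case by (simp add: nonneg_matrix_def mat_def)
next
  case (Suc k)
  then show ?case
    by (auto simp: nonneg_matrix_def matrix_matrix_mult_def intro!: sum_nonneg)
qed

lemma mat_pow_pos_closed_under:
  assumes "nonneg_matrix A" "closed_under A S" "i \<in> S" "0 < mat_pow A k $ i $ j"
  shows "j \<in> S"
  using assms(3,4)
proof (induction k arbitrary: i)
  case 0
  then show ?case by (simp add: mat_def split: if_splits)
next
  case (Suc k)
  then obtain l where "0 < A $ i $ l" "0 < mat_pow A k $ l $ j"
    using matrix_mult_pos_iff[OF assms(1) nonneg_matrix_mat_pow[OF assms(1)]] by auto
  with Suc assms(2) show ?case unfolding closed_under_def by blast
qed

lemma irreducible_closed_under_eq_UNIV:
  assumes "irreducible_nonneg A" "closed_under A S" "S \<noteq> {}"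
  shows "S = UNIV"
proof -
  from assms(3) obtain i where "i \<in> S" by blast
  have "j \<in> S" for j
  proof -
    obtain k where "0 < mat_pow A k $ i $ j"
      using assms(1) by (auto simp: irreducible_nonneg_def)
    with assms \<open>i \<in> S\<close> show ?thesis
      by (auto simp: irreducible_nonneg_def intro: mat_pow_pos_closed_under)
  qed
  then show ?thesis by blast
qed

lemma mat_pow_pos_mono:
  assumes "nonneg_matrix A" "nonneg_matrix B" "\<forall>i j. 0 < A $ i $ j \<longrightarrow> 0 < B $ i $ j"
  shows "0 < mat_pow A k $ i $ j \<Longrightarrow> 0 < mat_pow B k $ i $ j"
proof (induction k arbitrary: i)
  case 0
  then show ?case by simp
next
  case (Suc k)
  then show ?case
    using assms matrix_mult_pos_iff[OF assms(1) nonneg_matrix_mat_pow[OF assms(1)]]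
      matrix_mult_pos_iff[OF assms(2) nonneg_matrix_mat_pow[OF assms(2)]]
    by auto
qed

lemma irreducible_nonneg_mono:
  assumes "irreducible_nonneg A" "nonneg_matrix B" "\<forall>i j. 0 < A $ i $ j \<longrightarrow> 0 < B $ i $ j"
  shows "irreducible_nonneg B"
  using assms mat_pow_pos_mono[of A B] unfolding irreducible_nonneg_def by blast

section \<open>The symmetrization\<close>

lemma symmetrization_component:
  fixes A :: "real^'n^'n"
  shows "((1/2) *\<^sub>R (A + transpose A)) $ i $ j = (A $ i $ j + A $ j $ i) / 2"
  by (simp add: transpose_def)

lemma transpose_symmetrization:
  fixes A :: "real^'n^'n"
  shows "transpose ((1/2) *\<^sub>R (A + transpose A)) = (1/2) *\<^sub>R (A + transpose A)"
  by (simp add: vec_eq_iff symmetrization_component transpose_def)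

lemma nonneg_matrix_symmetrization:
  fixes A :: "real^'n^'n"
  shows "nonneg_matrix A \<Longrightarrow> nonneg_matrix ((1/2) *\<^sub>R (A + transpose A))"
  unfolding nonneg_matrix_def symmetrization_component by simp

lemma irreducible_nonneg_symmetrization:
  fixes A :: "real^'n^'n"
  assumes "irreducible_nonneg A"
  shows "irreducible_nonneg ((1/2) *\<^sub>R (A + transpose A))"
proof (rule irreducible_nonneg_mono[OF assms])
  have "nonneg_matrix A"
    using assms by (simp add: irreducible_nonneg_def)
  then show "nonneg_matrix ((1/2) *\<^sub>R (A + transpose A))"
    by (rule nonneg_matrix_symmetrization)
  show "\<forall>i j. 0 < A $ i $ j \<longrightarrow> 0 < ((1/2) *\<^sub>R (A + transpose A)) $ i $ j"
    using \<open>nonneg_matrix A\<close> unfolding symmetrization_component nonneg_matrix_def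
    by (simp add: add_pos_nonneg)
qed

lemma symmetrization_mult_vector:
  fixes A :: "real^'n^'n"
  shows "((1/2) *\<^sub>R (A + transpose A)) *v x = (1/2) *\<^sub>R (A *v x + transpose A *v x)"
  by (simp only: scaleR_matrix_vector_assoc[symmetric] matrix_vector_mult_add_rdistrib)

lemma inner_transpose_mult_vector_self:
  fixes A :: "real^'n^'n"
  shows "x \<bullet> (transpose A *v x) = x \<bullet> (A *v x)"
  by (simp add: dot_lmul_matrix[symmetric] inner_commute)

lemma inner_symmetrization_mult_vector_self:
  fixes A :: "real^'n^'n"
  shows "x \<bullet> (((1/2) *\<^sub>R (A + transpose A)) *v x) = x \<bullet> (A *v x)"
  by (simp only: symmetrization_mult_vector inner_scaleR_right inner_add_right
      inner_transpose_mult_vector_self) simp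

section \<open>Positive semidefiniteness of the Laplacian\<close>

lemma weighted_am_gm:
  fixes a b x y :: real
  assumes "0 < a" "0 < b"
  shows "x * y \<le> (x\<^sup>2 * b / a + y\<^sup>2 * a / b) / 2"
proof -
  have "0 \<le> (x * b - y * a)\<^sup>2" by simp
  then have "2 * (x * y) * (a * b) \<le> x\<^sup>2 * b\<^sup>2 + y\<^sup>2 * a\<^sup>2"
    by (simp add: power2_eq_square algebra_simps)
  with assms show ?thesis
    by (simp add: field_simps power2_eq_square)
qed

lemma sum_row_weighted_squares:
  fixes A :: "real^'n^'n" and w x :: "real^'n"
  assumes "A *v w = w" "\<forall>i. 0 < w $ i"
  shows "(\<Sum>i\<in>UNIV. \<Sum>j\<in>UNIV. A$i$j * w$j * (x$i^2 / w$i)) = (\<Sum>i\<in>UNIV. x$i^2)"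
proof -
  have "(\<Sum>i\<in>UNIV. \<Sum>j\<in>UNIV. A$i$j * w$j * (x$i^2 / w$i)) = (\<Sum>i\<in>UNIV. (A *v w)$i * (x$i^2 / w$i))"
    by (simp add: matrix_vector_mult_component sum_distrib_right sum_divide_distrib)
  also have "\<dots> = (\<Sum>i\<in>UNIV. x$i^2)"
    using assms by (intro sum.cong) (auto simp: less_imp_neq[symmetric])
  finally show ?thesis .
qed

(* A Schur test, with the same weight vector w for the rows and the columns of A. *)
lemma inner_mult_vector_le_inner_self:
  fixes A :: "real^'n^'n" and w x :: "real^'n"
  assumes "nonneg_matrix A" "A *v w = w" "transpose A *v w = w" "\<forall>i. 0 < w $ i"
  shows "x \<bullet> (A *v x) \<le> x \<bullet> x"
proof -
  have column_sums: "(\<Sum>i\<in>UNIV. \<Sum>j\<in>UNIV. A$i$j * w$i * (x$j^2 / w$j)) = (\<Sum>j\<in>UNIV. x$j^2)"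
  proof -
    have "(\<Sum>i\<in>UNIV. \<Sum>j\<in>UNIV. A$i$j * w$i * (x$j^2 / w$j))
        = (\<Sum>j\<in>UNIV. \<Sum>i\<in>UNIV. transpose A$j$i * w$i * (x$j^2 / w$j))"
      by (subst sum.swap) (simp add: transpose_def)
    also have "\<dots> = (\<Sum>j\<in>UNIV. x$j^2)"
      using assms(3,4) by (rule sum_row_weighted_squares)
    finally show ?thesis .
  qed
  have "x \<bullet> (A *v x) = (\<Sum>i\<in>UNIV. \<Sum>j\<in>UNIV. A$i$j * (x$i * x$j))"
    by (simp add: inner_vec_sum matrix_vector_mult_component sum_distrib_left algebra_simps)
  also have "\<dots> \<le> (\<Sum>i\<in>UNIV. \<Sum>j\<in>UNIV. A$i$j * ((x$i^2 * w$j / w$i + x$j^2 * w$i / w$j) / 2))"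
    using assms(1,4) by (intro sum_mono mult_left_mono weighted_am_gm) (auto simp: nonneg_matrix_def)
  also have "\<dots> = ((\<Sum>i\<in>UNIV. \<Sum>j\<in>UNIV. A$i$j * w$j * (x$i^2 / w$i))
                   + (\<Sum>i\<in>UNIV. \<Sum>j\<in>UNIV. A$i$j * w$i * (x$j^2 / w$j))) / 2"
    by (simp add: sum.distrib sum_divide_distrib[symmetric] algebra_simps)
  also have "\<dots> = ((\<Sum>i\<in>UNIV. x$i^2) + (\<Sum>i\<in>UNIV. x$i^2)) / 2"
    by (simp only: sum_row_weighted_squares[OF assms(2,4)] column_sums)
  also have "\<dots> = x \<bullet> x"
    by (simp add: inner_vec_sum power2_eq_square)
  finally show ?thesis .
qed

lemma inner_laplacian_nonneg:
  fixes A :: "real^'n^'n" and w x :: "real^'n"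
  assumes "nonneg_matrix A" "A *v w = w" "transpose A *v w = w" "\<forall>i. 0 < w $ i"
  shows "0 \<le> x \<bullet> ((mat 1 - A) *v x)"
  using inner_mult_vector_le_inner_self[OF assms]
  by (simp add: mat_one_minus_mult_vector inner_diff_right)

section \<open>The Dirichlet problem\<close>

lemma abs_mult_vector_le:
  fixes B :: "real^'n^'n"
  assumes "nonneg_matrix B"
  shows "\<bar>(B *v d) $ i\<bar> \<le> (B *v (\<chi> l. \<bar>d $ l\<bar>)) $ i"
proof -
  have "\<bar>(B *v d) $ i\<bar> \<le> (\<Sum>l\<in>UNIV. \<bar>B $ i $ l * d $ l\<bar>)"
    unfolding matrix_vector_mult_component by (rule sum_abs)
  also have "\<dots> = (B *v (\<chi> l. \<bar>d $ l\<bar>)) $ i"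
    using assms by (simp add: matrix_vector_mult_component nonneg_matrix_def abs_mult)
  finally show ?thesis .
qed

(* Where x/w attains its maximum m, x is dominated by its B-average, which forces x = m w at
   every successor. *)
lemma closed_under_max_ratio_set:
  fixes B :: "real^'n^'n" and w x :: "real^'n"
  assumes "nonneg_matrix B" "B *v w = w" "\<forall>l. x $ l \<le> m * w $ l"
    and "\<forall>i. x $ i = m * w $ i \<longrightarrow> x $ i \<le> (B *v x) $ i"
  shows "closed_under B {i. x $ i = m * w $ i}"
  unfolding closed_under_def
proof (intro ballI allI impI)
  fix i j assume "i \<in> {i. x $ i = m * w $ i}" "0 < B $ i $ j"
  define y where "y = m *\<^sub>R w - x"
  have y_nonneg: "0 \<le> B $ i $ l * y $ l" for l
    using assms(1,3) by (simp add: y_def nonneg_matrix_def)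
  have "(B *v y) $ i = m * w $ i - (B *v x) $ i"
    using assms(2) by (simp add: y_def matrix_vector_mult_diff_distrib matrix_vector_mult_scaleR)
  with assms(4) \<open>i \<in> {i. x $ i = m * w $ i}\<close> have "(\<Sum>l\<in>UNIV. B $ i $ l * y $ l) \<le> 0"
    by (simp add: matrix_vector_mult_component)
  then have "B $ i $ j * y $ j = 0"
    using y_nonneg by (metis (no_types, lifting) UNIV_I finite order_antisym sum_nonneg sum_nonneg_eq_0_iff)
  with \<open>0 < B $ i $ j\<close> show "j \<in> {i. x $ i = m * w $ i}"
    by (simp add: y_def)
qed

lemma ex_max_ratio:
  fixes w x :: "real^'n"
  assumes "\<forall>i. 0 < w $ i"
  obtains m i0 where "\<forall>l. x $ l \<le> m * w $ l" "x $ i0 = m * w $ i0"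
proof -
  define m where "m = Max (range (\<lambda>l. x $ l / w $ l))"
  have "m \<in> range (\<lambda>l. x $ l / w $ l)"
    unfolding m_def by (intro Max_in) auto
  then obtain i0 where "m = x $ i0 / w $ i0"
    by blast
  then have "x $ i0 = m * w $ i0"
    using assms by (simp add: less_imp_neq[symmetric])
  moreover have "x $ l \<le> m * w $ l" for l
  proof -
    have "x $ l / w $ l \<le> m"
      unfolding m_def by (intro Max_ge) auto
    then show ?thesis
      using assms by (simp add: pos_divide_le_eq)
  qed
  ultimately show thesis
    using that by blast
qed

lemma dirichlet_solution_zero:
  fixes B :: "real^'n^'n" and w d :: "real^'n"
  assumes irr: "irreducible_nonneg B" and "B *v w = w" and w_pos: "\<forall>i. 0 < w $ i"
    and "U \<noteq> {}" and d: "dirichlet_solution B U (\<lambda>_. 0) d"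
  shows "d = 0"
proof -
  have nonneg: "nonneg_matrix B"
    using irr by (simp add: irreducible_nonneg_def)
  define x where "x = (\<chi> i. \<bar>d $ i\<bar>)"
  obtain m i0 where x_le: "\<forall>l. x $ l \<le> m * w $ l" and "x $ i0 = m * w $ i0"
    using ex_max_ratio[OF w_pos] by blast
  have "m \<le> 0"
  proof (rule ccontr)
    assume "\<not> m \<le> 0"
    define S where "S = {i. x $ i = m * w $ i}"
    have "closed_under B S"
      unfolding S_def
    proof (rule closed_under_max_ratio_set[OF nonneg \<open>B *v w = w\<close> x_le], intro allI impI)
      fix i assume "x $ i = m * w $ i"
      then have "x $ i \<noteq> 0"
        using \<open>\<not> m \<le> 0\<close> w_pos[rule_format, of i] by simp
      then have "i \<notin> U"
        using d by (auto simp: x_def dirichlet_solution_def)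
      then have "d $ i = (B *v d) $ i"
        using d by (simp add: dirichlet_solution_def mat_one_minus_mult_vector)
      then show "x $ i \<le> (B *v x) $ i"
        using abs_mult_vector_le[OF nonneg, of d i] by (simp add: x_def)
    qed
    moreover have "i0 \<in> S"
      using \<open>x $ i0 = m * w $ i0\<close> by (simp add: S_def)
    ultimately have "S = UNIV"
      using irreducible_closed_under_eq_UNIV[OF irr] by blast
    moreover obtain u where "u \<in> U"
      using \<open>U \<noteq> {}\<close> by blast
    ultimately have "x $ u = m * w $ u"
      by (auto simp: S_def)
    moreover have "x $ u = 0"
      using d \<open>u \<in> U\<close> by (simp add: x_def dirichlet_solution_def)
    ultimately show False
      using \<open>\<not> m \<le> 0\<close> w_pos[rule_format, of u] by simp
  qed
  then have "x $ i \<le> 0" for i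
    using x_le w_pos[rule_format, of i] by (meson mult_nonpos_nonneg less_imp_le order_trans)
  then show "d = 0"
    by (simp add: x_def vec_eq_iff)
qed

lemma dirichlet_solution_ex1:
  fixes B :: "real^'n^'n" and w :: "real^'n"
  assumes "irreducible_nonneg B" "B *v w = w" "\<forall>i. 0 < w $ i" "U \<noteq> {}"
  shows "\<exists>!q. dirichlet_solution B U c q"
proof -
  define T where "T x = (\<chi> i. if i \<in> U then x $ i else ((mat 1 - B) *v x) $ i)" for x :: "real^'n"
  have T_eq_iff: "T q = (\<chi> i. if i \<in> U then c' i else 0) \<longleftrightarrow> dirichlet_solution B U c' q" for q c'
    by (auto simp: T_def dirichlet_solution_def vec_eq_iff)
  have "linear T"
    by (rule linearI) (auto simp: T_def vec_eq_iff matrix_vector_right_distrib matrix_vector_mult_scaleR)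
  moreover have "T x = 0 \<Longrightarrow> x = 0" for x
    using T_eq_iff[of x "\<lambda>_. 0"] dirichlet_solution_zero[OF assms, of x] by (simp add: zero_vec_def)
  ultimately have "inj T"
    by (simp add: linear_inj_iff_eq_0)
  then have "bij T"
    using \<open>linear T\<close> linear_injective_imp_surjective by (auto simp: bij_def)
  then have "\<exists>!q. T q = (\<chi> i. if i \<in> U then c i else 0)"
    by (simp add: bij_iff)
  then show ?thesis
    by (simp add: T_eq_iff)
qed

lemma obtain_cap_dirichlet_solution:
  fixes B :: "real^'n^'n" and w :: "real^'n"
  assumes "irreducible_nonneg B" "B *v w = w" "\<forall>i. 0 < w $ i" "U \<noteq> {}"
  obtains q where "dirichlet_solution B U (\<lambda>i. w $ i * b i) q"
    and "cap U b w B = q \<bullet> ((mat 1 - B) *v q)"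
proof -
  have ex1: "\<exists>!q. dirichlet_solution B U (\<lambda>i. w $ i * b i) q"
    by (rule dirichlet_solution_ex1[OF assms])
  then obtain q where q: "dirichlet_solution B U (\<lambda>i. w $ i * b i) q"
    by blast
  have "(THE q. dirichlet_solution B U (\<lambda>i. w $ i * b i) q) = q"
    using ex1 q by (rule the1_equality)
  then have "cap U b w B = q \<bullet> ((mat 1 - B) *v q)"
    by (simp add: cap_def dirichlet_solution_def)
  with q show thesis
    by (rule that)
qed

lemma dirichlet_principle:
  fixes M :: "real^'n^'n" and p q :: "real^'n"
  assumes "transpose M = M" "\<forall>x. 0 \<le> x \<bullet> (M *v x)"
    and "\<forall>i. i \<notin> U \<longrightarrow> (M *v q) $ i = 0" "\<forall>i\<in>U. p $ i = q $ i"
  shows "q \<bullet> (M *v q) \<le> p \<bullet> (M *v p)"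
proof -
  define d where "d = p - q"
  have orth: "d \<bullet> (M *v q) = 0"
    unfolding inner_vec_sum using assms(3,4) by (intro sum.neutral) (auto simp: d_def)
  have "q \<bullet> (M *v d) = d \<bullet> (M *v q)"
    by (metis assms(1) dot_lmul_matrix inner_commute transpose_matrix_vector)
  moreover have "p = q + d"
    by (simp add: d_def)
  ultimately have "p \<bullet> (M *v p) = q \<bullet> (M *v q) + d \<bullet> (M *v d)"
    using orth by (simp add: matrix_vector_right_distrib inner_add_left inner_add_right)
  with assms(2) show ?thesis
    by (metis le_add_same_cancel1)
qed

theorem lemma5p23:
  fixes A :: "real^'n^'n" and w :: "real^'n" and U :: "'n set" and b :: "'n \<Rightarrow> real"
  assumes "irreducible_nonneg A"
    and "largest_eigenvalue_one A"
    and "\<forall>i. w $ i > 0"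
    and "A *v w = w"
    and "transpose A *v w = w"
    and "U \<noteq> {}" and "U \<noteq> UNIV"
  shows "cap U b w ((1/2) *\<^sub>R (A + transpose A)) \<le> cap U b w A"
proof -
  note irr = assms(1) and w_pos = assms(3) and Aw = assms(4) and ATw = assms(5)
  define As where "As = (1/2) *\<^sub>R (A + transpose A)"
  have irr_s: "irreducible_nonneg As" and sym: "transpose As = As"
    using irreducible_nonneg_symmetrization[OF irr] transpose_symmetrization by (simp_all add: As_def)
  have As_w: "As *v w = w"
    using Aw ATw by (simp add: As_def symmetrization_mult_vector del: transpose_matrix_vector)
  obtain q where q: "dirichlet_solution A U (\<lambda>i. w $ i * b i) q"
    and cap_A: "cap U b w A = q \<bullet> ((mat 1 - A) *v q)"
    using obtain_cap_dirichlet_solution[OF irr Aw w_pos assms(6)] .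
  obtain qs where qs: "dirichlet_solution As U (\<lambda>i. w $ i * b i) qs"
    and cap_As: "cap U b w As = qs \<bullet> ((mat 1 - As) *v qs)"
    using obtain_cap_dirichlet_solution[OF irr_s As_w w_pos assms(6)] .
  have "qs \<bullet> ((mat 1 - As) *v qs) \<le> q \<bullet> ((mat 1 - As) *v q)"
  proof (rule dirichlet_principle[where U = U])
    show "transpose (mat 1 - As) = mat 1 - As"
      by (simp add: transpose_diff sym)
    show "\<forall>x. 0 \<le> x \<bullet> ((mat 1 - As) *v x)"
      using irr_s by (intro allI inner_laplacian_nonneg[of As w])
        (simp_all add: irreducible_nonneg_def sym As_w w_pos)
  qed (use q qs in \<open>auto simp: dirichlet_solution_def\<close>)
  also have "\<dots> = q \<bullet> ((mat 1 - A) *v q)"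
    by (simp add: As_def mat_one_minus_mult_vector inner_diff_right
        inner_symmetrization_mult_vector_self del: transpose_matrix_vector)
  finally show ?thesis
    using cap_A cap_As by (simp add: As_def)
qed

end
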